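(* Let $t$ be a positive integer, $n_1,\dots,n_t$ positive integers, and $h_1,\dots,h_t\in\mathbb{R}^d$. Suppose that the subgroup $G=h_1\mathbb{Z}+\dots+h_t\mathbb{Z}$ of $\mathbb{R}^d$ has Euclidean closure $\overline{G}=V\oplus\Lambda$, where $V$ is a proper vector subspace of $\mathbb{R}^d$ and $\Lambda$ is a discrete additive subgroup of $\mathbb{R}^d$. Then there exist a finite dimensional linear subspace $H\subseteq C(\mathbb{R}^d)$ with $\bigcup_{k=1}^t\Delta_{h_k}(H)\subseteq H$ and a continuous function $\varphi:\mathbb{R}^d\to\mathbb{R}$ with $\Delta_{h_k}^{n_k}\varphi\in H$ for $k=1,\dots,t$, such that $\varphi$ is not an exponential polynomial on $\mathbb{R}^d$.
   Context: $C(\mathbb{R}^d)$ is the space of continuous complex valued functions on $\mathbb{R}^d$; $(\Delta_hf)(x)=f(x+h)-f(x)$ and $\Delta_h^m$ is its $m$-fold composition. An exponential polynomial on $\mathbb{R}^d$ is a function of the form $x\mapsto\sum_{j=1}^r p_j(x)e^{\langle\lambda_j,x\rangle}$ with polynomials $p_j$ and $\lambda_j\in\mathbb{C}^d$. *)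

theory Defs
  imports "HOL-Analysis.Analysis"
begin

definition diff_op :: "real^'n \<Rightarrow> (real^'n \<Rightarrow> complex) \<Rightarrow> (real^'n \<Rightarrow> complex)" where
  "diff_op h f = (\<lambda>x. f (x + h) - f x)"

definition diff_pow :: "real^'n \<Rightarrow> nat \<Rightarrow> (real^'n \<Rightarrow> complex) \<Rightarrow> (real^'n \<Rightarrow> complex)" where
  "diff_pow h m = (diff_op h ^^ m)"

definition fin_dim_cont_subspace :: "(real^'n \<Rightarrow> complex) set \<Rightarrow> bool" where
  "fin_dim_cont_subspace H \<longleftrightarrow>
     (\<exists>B. finite B \<and> (\<forall>b\<in>B. continuous_on UNIV b) \<and>
          H = {(\<lambda>x. \<Sum>b\<in>B. c b * b x) | c. True})"

definition poly_fun :: "(real^'n \<Rightarrow> complex) \<Rightarrow> bool" where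
  "poly_fun p \<longleftrightarrow> (\<exists>A c. finite A \<and>
     p = (\<lambda>x. \<Sum>\<alpha>\<in>A. c \<alpha> * (\<Prod>i\<in>UNIV. (complex_of_real (x $ i)) ^ (\<alpha> i :: nat))))"

definition exp_poly :: "(real^'n \<Rightarrow> complex) \<Rightarrow> bool" where
  "exp_poly f \<longleftrightarrow> (\<exists>r p lam. (\<forall>j<r. poly_fun (p j)) \<and>
     f = (\<lambda>x. \<Sum>j<(r::nat). p j x * exp (\<Sum>i\<in>UNIV. (lam j :: complex^'n) $ i * complex_of_real (x $ i))))"

definition add_subgroup :: "(real^'n) set \<Rightarrow> bool" where
  "add_subgroup L \<longleftrightarrow> 0 \<in> L \<and> (\<forall>x\<in>L. \<forall>y\<in>L. x + y \<in> L \<and> x - y \<in> L)"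

definition discrete_set :: "(real^'n) set \<Rightarrow> bool" where
  "discrete_set L \<longleftrightarrow> (\<forall>x\<in>L. \<not> x islimpt L)"

definition gen_group :: "nat \<Rightarrow> (nat \<Rightarrow> real^'n) \<Rightarrow> (real^'n) set" where
  "gen_group t h = {(\<Sum>k\<in>{1..t}. of_int (m k) *\<^sub>R h k) | m. True}"

end

theory Submission
  imports Defs "HOL-Complex_Analysis.Complex_Analysis"
begin

text \<open>
  The closure \<open>K = V + \<Lambda>\<close> of \<open>G\<close> is a closed additive subgroup of \<open>\<real>\<^sup>d\<close>, and it is proper
  because \<open>\<Lambda>\<close> is countable while \<open>V\<close> is a proper subspace. Pick \<open>p \<notin> K\<close> and let
  \<open>\<phi> x = max 0 (dist(x, K) - dist(p, K)/2)\<close>. This \<open>\<phi>\<close> is continuous and \<open>K\<close>-periodic, so all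
  the differences \<open>\<Delta>\<^sub>h\<^sub>k\<close> kill it and \<open>H = {0}\<close> will do. It is not an exponential polynomial:
  on the line through \<open>0\<close> and \<open>p\<close> an exponential polynomial extends to an entire function,
  whereas \<open>\<phi>\<close> vanishes near \<open>0\<close> on that line but not at \<open>p\<close>.
\<close>

lemma poly_fun_along_line_holomorphic:
  fixes q :: "real^'d \<Rightarrow> complex"
  assumes "poly_fun q"
  obtains Q where "Q holomorphic_on UNIV" "\<And>s. Q (complex_of_real s) = q (s *\<^sub>R p)"
proof -
  obtain A c where q: "q = (\<lambda>x. \<Sum>\<alpha>\<in>A. c \<alpha> * (\<Prod>i\<in>UNIV. complex_of_real (x $ i) ^ (\<alpha> i :: nat)))"
    using assms unfolding poly_fun_def by blast
  let ?Q = "\<lambda>z. \<Sum>\<alpha>\<in>A. c \<alpha> * (\<Prod>i\<in>UNIV. (z * complex_of_real (p $ i)) ^ \<alpha> i)"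
  have "?Q holomorphic_on UNIV" by (intro holomorphic_intros)
  moreover have "?Q (complex_of_real s) = q (s *\<^sub>R p)" for s
    by (simp add: q)
  ultimately show ?thesis by (rule that)
qed

lemma exp_poly_along_line_holomorphic:
  fixes f :: "real^'d \<Rightarrow> complex"
  assumes "exp_poly f"
  obtains F where "F holomorphic_on UNIV" "\<And>s. F (complex_of_real s) = f (s *\<^sub>R p)"
proof -
  obtain r q lam where q: "\<forall>j<r. poly_fun (q j)" and
    f: "f = (\<lambda>x. \<Sum>j<(r::nat). q j x * exp (\<Sum>i\<in>UNIV. (lam j :: complex^'d) $ i * complex_of_real (x $ i)))"
    using assms unfolding exp_poly_def by blast
  have "\<exists>Q. j < r \<longrightarrow> Q holomorphic_on UNIV \<and> (\<forall>s. Q (complex_of_real s) = q j (s *\<^sub>R p))" for j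
  proof (cases "j < r")
    case True
    then obtain Q where "Q holomorphic_on UNIV" "\<And>s. Q (complex_of_real s) = q j (s *\<^sub>R p)"
      using poly_fun_along_line_holomorphic q by blast
    then show ?thesis by blast
  qed simp
  then obtain Q where Q: "\<And>j. j < r \<Longrightarrow> Q j holomorphic_on UNIV"
      "\<And>j s. j < r \<Longrightarrow> Q j (complex_of_real s) = q j (s *\<^sub>R p)"
    by metis
  let ?F = "\<lambda>z. \<Sum>j<r. Q j z * exp (\<Sum>i\<in>UNIV. lam j $ i * (z * complex_of_real (p $ i)))"
  have "?F holomorphic_on UNIV"
    using Q(1) by (intro holomorphic_intros) auto
  moreover have "?F (complex_of_real s) = f (s *\<^sub>R p)" for s
    unfolding f by (intro sum.cong refl) (simp add: Q(2))
  ultimately show ?thesis by (rule that)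
qed

lemma exp_poly_vanishing_near_0_along_line:
  fixes f :: "real^'d \<Rightarrow> complex"
  assumes "exp_poly f" "\<epsilon> > 0" "\<And>s. \<bar>s\<bar> < \<epsilon> \<Longrightarrow> f (s *\<^sub>R p) = 0"
  shows "f p = 0"
proof -
  obtain F where F: "F holomorphic_on UNIV" "\<And>s. F (complex_of_real s) = f (s *\<^sub>R p)"
    using exp_poly_along_line_holomorphic[OF assms(1)] by blast
  let ?U = "complex_of_real ` {-\<epsilon><..<\<epsilon>}"
  have limpt: "0 islimpt ?U"
  proof (rule islimpt_approachable[THEN iffD2], intro allI impI)
    fix e :: real assume "e > 0"
    then have "min e \<epsilon> / 2 \<in> {-\<epsilon><..<\<epsilon>}" "min e \<epsilon> / 2 \<noteq> 0" "\<bar>min e \<epsilon> / 2\<bar> < e"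
      using assms(2) by auto
    then have "complex_of_real (min e \<epsilon> / 2) \<in> ?U" "complex_of_real (min e \<epsilon> / 2) \<noteq> 0"
      "dist (complex_of_real (min e \<epsilon> / 2)) 0 < e"
      by (auto simp del: of_real_divide)
    then show "\<exists>z\<in>?U. z \<noteq> 0 \<and> dist z 0 < e" by blast
  qed
  have "F 1 = 0"
    by (rule analytic_continuation[OF F(1) open_UNIV connected_UNIV subset_UNIV UNIV_I limpt])
       (auto simp: F(2) assms(3))
  then show ?thesis using F(2)[of 1] by simp
qed

lemma countable_discrete_subgroup:
  fixes L :: "(real^'d) set"
  assumes "add_subgroup L" "discrete_set L"
  shows "countable L"
proof -
  have L0: "0 \<in> L" and L_diff: "\<And>x y. x \<in> L \<Longrightarrow> y \<in> L \<Longrightarrow> x - y \<in> L"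
    using assms(1) unfolding add_subgroup_def by auto
  have "\<not> 0 islimpt L" using assms(2) L0 unfolding discrete_set_def by blast
  then obtain e where e: "e > 0" "\<And>x. x \<in> L \<Longrightarrow> x \<noteq> 0 \<Longrightarrow> e \<le> norm x"
    unfolding islimpt_approachable by (force simp: not_less)
  have sep: "e \<le> dist x y" if "x \<in> L" "y \<in> L" "x \<noteq> y" for x y
    using e(2)[OF L_diff[OF that(1,2)]] that(3) by (simp add: dist_norm)
  define B where "B x = ball x (e/2)" for x :: "real^'d"
  have "inj_on B L"
  proof (rule inj_onI)
    fix x y assume "x \<in> L" "y \<in> L" "B x = B y"
    then have "dist y x < e/2" using e(1) unfolding B_def by (metis centre_in_ball half_gt_zero mem_ball)
    then show "x = y" using sep[OF \<open>y\<in>L\<close> \<open>x\<in>L\<close>] zero_le_dist[of y x] by (cases "y = x") auto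
  qed
  moreover have "pairwise disjnt (B ` L)"
  proof (rule pairwise_imageI)
    fix x y assume xy: "x \<in> L" "y \<in> L" "x \<noteq> y" "B x \<noteq> B y"
    show "disjnt (B x) (B y)"
    proof (rule ccontr)
      assume "\<not> disjnt (B x) (B y)"
      then obtain z where "dist x z < e/2" "dist y z < e/2" unfolding B_def disjnt_def by auto
      then have "dist x y < e" by (metis dist_commute dist_triangle_half_l)
      then show False using sep[OF xy(1-3)] by simp
    qed
  qed
  then have "countable (B ` L)"
    by (intro countable_disjoint_open_subsets) (auto simp: B_def)
  ultimately show ?thesis using countable_image_inj_on by blast
qed

lemma subspace_plus_countable_neq_UNIV:
  fixes V L :: "'a::real_vector set"
  assumes "subspace V" "V \<noteq> UNIV" "countable L"
  shows "{v + l | v l. v \<in> V \<and> l \<in> L} \<noteq> UNIV"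
proof
  assume covers: "{v + l | v l. v \<in> V \<and> l \<in> L} = UNIV"
  obtain w where w: "w \<notin> V" using assms(2) by blast
  have "\<exists>l. l \<in> L \<and> s *\<^sub>R w - l \<in> V" for s
  proof -
    obtain v l where "s *\<^sub>R w = v + l" "v \<in> V" "l \<in> L" using covers by blast
    then show ?thesis by (intro exI[of _ l]) simp
  qed
  then obtain g where g: "\<And>s. g s \<in> L \<and> s *\<^sub>R w - g s \<in> V"
    by metis
  text \<open>The points \<open>g s\<close> of \<open>L\<close> lie in pairwise distinct cosets of \<open>V\<close>.\<close>
  have "inj g"
  proof (rule injI, rule ccontr)
    fix s s' assume "g s = g s'" "s \<noteq> s'"
    then have "(s - s') *\<^sub>R w = (s *\<^sub>R w - g s) - (s' *\<^sub>R w - g s')"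
      by (simp add: algebra_simps)
    then have "(s - s') *\<^sub>R w \<in> V" using g assms(1) by (metis subspace_diff)
    then have "inverse (s - s') *\<^sub>R (s - s') *\<^sub>R w \<in> V" by (rule subspace_scale[OF assms(1)])
    then show False using w \<open>s \<noteq> s'\<close> by simp
  qed
  moreover have "countable (range g)" using g countable_subset[OF _ assms(3)] by blast
  ultimately show False using uncountable_UNIV_real countable_image_inj_on by blast
qed

lemma add_subgroup_subspace_plus:
  assumes "subspace V" "add_subgroup L"
  shows "add_subgroup {v + l | v l. v \<in> V \<and> l \<in> L}"
  unfolding add_subgroup_def
proof (intro conjI ballI)
  show "0 \<in> {v + l | v l. v \<in> V \<and> l \<in> L}"
    using assms subspace_0 unfolding add_subgroup_def by force
next
  fix x y assume "x \<in> {v + l | v l. v \<in> V \<and> l \<in> L}" "y \<in> {v + l | v l. v \<in> V \<and> l \<in> L}"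
  then obtain v l v' l' where "x = v + l" "y = v' + l'" "v \<in> V" "l \<in> L" "v' \<in> V" "l' \<in> L"
    by blast
  moreover have "x + y = (v + v') + (l + l')" "x - y = (v - v') + (l - l')"
    using calculation by (simp_all add: algebra_simps)
  ultimately show "x + y \<in> {v + l | v l. v \<in> V \<and> l \<in> L}" "x - y \<in> {v + l | v l. v \<in> V \<and> l \<in> L}"
    using assms subspace_add subspace_diff unfolding add_subgroup_def by blast+
qed

lemma infdist_translate_add_subgroup:
  assumes "add_subgroup K" "g \<in> K"
  shows "infdist (x + g) K = infdist x K"
proof -
  have le: "infdist (y + c) K \<le> infdist y K" if "c \<in> K" for y c
  proof -
    have "infdist (y + c) K \<le> dist y a" if "a \<in> K" for a
    proof -
      have "a + c \<in> K" using assms(1) \<open>a \<in> K\<close> \<open>c \<in> K\<close> unfolding add_subgroup_def by blast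
      then have "infdist (y + c) K \<le> dist (y + c) (a + c)" by (rule infdist_le)
      then show ?thesis by (simp add: dist_norm)
    qed
    moreover have "K \<noteq> {}" using \<open>c \<in> K\<close> by blast
    ultimately show ?thesis unfolding infdist_def by (auto intro: cINF_greatest)
  qed
  have "- g \<in> K" using assms unfolding add_subgroup_def by (metis diff_0)
  then have "infdist (x + g + - g) K \<le> infdist (x + g) K" by (rule le)
  then show ?thesis using le[OF assms(2), of x] by simp
qed

lemma diff_pow_periodic:
  assumes "\<And>x. f (x + h) = f x" "m \<ge> 1"
  shows "diff_pow h m f = (\<lambda>x. 0)"
proof -
  have zero: "(diff_op h ^^ k) (\<lambda>x. 0) = (\<lambda>x. 0)" for k
    by (induction k) (simp_all add: diff_op_def)
  obtain k where "m = Suc k" using assms(2) by (cases m) auto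
  then show ?thesis unfolding diff_pow_def
    by (simp add: funpow_Suc_right diff_op_def assms(1) zero del: funpow.simps)
qed

lemma generator_in_gen_group:
  assumes "k \<in> {1..t}"
  shows "h k \<in> gen_group t h"
proof -
  have "(\<Sum>j\<in>{1..t}. of_int (if j = k then 1 else 0) *\<^sub>R h j) = (\<Sum>j\<in>{1..t}. if j = k then h j else 0)"
    by (rule sum.cong) auto
  also have "\<dots> = h k" using assms by simp
  finally have "h k = (\<Sum>j\<in>{1..t}. of_int (if j = k then 1 else 0) *\<^sub>R h j)" by (rule sym)
  then show ?thesis
    unfolding gen_group_def mem_Collect_eq by (intro exI[of _ "\<lambda>j. if j = k then 1 else 0"] conjI TrueI)
qed

lemma fin_dim_cont_subspace_zero: "fin_dim_cont_subspace {\<lambda>x. 0}"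
  unfolding fin_dim_cont_subspace_def by (intro exI[of _ "{}"]) auto

lemma periodic_not_exp_poly:
  fixes K :: "(real^'d) set"
  assumes "closed K" "add_subgroup K" "K \<noteq> UNIV"
  obtains \<phi> :: "real^'d \<Rightarrow> real"
  where "continuous_on UNIV \<phi>" "\<And>g x. g \<in> K \<Longrightarrow> \<phi> (x + g) = \<phi> x"
    "\<not> exp_poly (\<lambda>x. complex_of_real (\<phi> x))"
proof -
  obtain p where p: "p \<notin> K" using assms(3) by blast
  have K0: "0 \<in> K" using assms(2) unfolding add_subgroup_def by blast
  define \<delta> where "\<delta> = infdist p K"
  have \<delta>: "\<delta> > 0" unfolding \<delta>_def using infdist_pos_not_in_closed[OF assms(1) _ p] K0 by blast
  define \<phi> where "\<phi> x = max 0 (infdist x K - \<delta>/2)" for x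
  have "continuous_on UNIV \<phi>" unfolding \<phi>_def by (intro continuous_intros)
  moreover have "\<phi> (x + g) = \<phi> x" if "g \<in> K" for g x
    unfolding \<phi>_def using infdist_translate_add_subgroup[OF assms(2) that] by simp
  moreover have "\<not> exp_poly (\<lambda>x. complex_of_real (\<phi> x))"
  proof
    have np: "norm p + 1 > 0" using norm_ge_zero[of p] by linarith
    assume "exp_poly (\<lambda>x. complex_of_real (\<phi> x))"
    moreover have "\<delta> / 2 / (norm p + 1) > 0" using \<delta> np by simp
    moreover have "complex_of_real (\<phi> (s *\<^sub>R p)) = 0" if s: "\<bar>s\<bar> < \<delta> / 2 / (norm p + 1)" for s
    proof -
      have "infdist (s *\<^sub>R p) K \<le> dist (s *\<^sub>R p) 0" using K0 by (rule infdist_le)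
      also have "\<dots> = \<bar>s\<bar> * norm p" by simp
      also have "\<dots> \<le> \<bar>s\<bar> * (norm p + 1)" by (simp add: mult_left_mono)
      also have "\<dots> < \<delta> / 2" using s pos_less_divide_eq[OF np] by blast
      finally show ?thesis unfolding \<phi>_def by simp
    qed
    ultimately have "complex_of_real (\<phi> p) = 0" by (rule exp_poly_vanishing_near_0_along_line)
    then show False using \<delta> unfolding \<phi>_def \<delta>_def by simp
  qed
  ultimately show ?thesis by (rule that)
qed

theorem proposition7:
  fixes t :: nat and n :: "nat \<Rightarrow> nat" and h :: "nat \<Rightarrow> real^'d"
    and V L :: "(real^'d) set"
  assumes "t \<ge> 1"
    and "\<forall>k\<in>{1..t}. n k \<ge> 1"
    and "subspace V" and "V \<noteq> UNIV"
    and "add_subgroup L" and "discrete_set L"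
    and "V \<inter> L = {0}"
    and "closure (gen_group t h) = {v + l | v l. v \<in> V \<and> l \<in> L}"
  shows "\<exists>H (\<phi> :: real^'d \<Rightarrow> real).
           fin_dim_cont_subspace H \<and>
           (\<forall>k\<in>{1..t}. \<forall>f\<in>H. diff_op (h k) f \<in> H) \<and>
           continuous_on UNIV \<phi> \<and>
           (\<forall>k\<in>{1..t}. diff_pow (h k) (n k) (\<lambda>x. complex_of_real (\<phi> x)) \<in> H) \<and>
           \<not> exp_poly (\<lambda>x. complex_of_real (\<phi> x))"
proof -
  let ?K = "closure (gen_group t h)"
  have "add_subgroup ?K" "?K \<noteq> UNIV"
    unfolding assms(8)
    using add_subgroup_subspace_plus[OF assms(3,5)]
      subspace_plus_countable_neq_UNIV[OF assms(3,4) countable_discrete_subgroup[OF assms(5,6)]]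
    by auto
  then obtain \<phi> where \<phi>: "continuous_on UNIV \<phi>" "\<And>g x. g \<in> ?K \<Longrightarrow> \<phi> (x + g) = \<phi> x"
    "\<not> exp_poly (\<lambda>x. complex_of_real (\<phi> x))"
    using periodic_not_exp_poly[of ?K] by blast
  have diff_pow_zero: "diff_pow (h k) (n k) (\<lambda>x. complex_of_real (\<phi> x)) \<in> {\<lambda>x. 0}" if "k \<in> {1..t}" for k
    unfolding singleton_iff
  proof (rule diff_pow_periodic)
    have "h k \<in> ?K" using generator_in_gen_group[OF that] closure_subset by blast
    then show "complex_of_real (\<phi> (x + h k)) = complex_of_real (\<phi> x)" for x by (simp add: \<phi>(2))
  qed (use that assms(2) in auto)
  have diff_op_zero: "diff_op (h k) f \<in> {\<lambda>x. 0}" if "f \<in> {\<lambda>x. 0}" for k f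
    using that by (simp add: diff_op_def)
  show ?thesis
    by (intro exI[of _ "{\<lambda>x. 0}"] exI[of _ \<phi>] conjI ballI fin_dim_cont_subspace_zero diff_op_zero diff_pow_zero \<phi>(1,3))
qed

end
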